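(* Let $0<\beta<1$, $p=\lceil\beta^{-1}\rceil-1$, and let $t$ be an integer with $2\le t\le p$. Let $G$ be a graph of order $n$ with minimum degree $(1-\beta)n$. Then $$\sum_{S\in\mathcal{K}_{t+1}}\widetilde D(S)\le\big(t-1+(p-2t+2)(t+1)\beta\big)k_{t+1}+(t-1)\sum_{S\in\mathcal{K}_{t+1}}D_+(S)-(1-t\beta)(p-t+1)\beta n k_t-(t-1)(t+2)\frac{k_{t+2}}{n}-(1-t\beta)n\sum_{T\in\mathcal{K}_t}D_+(T).$$ Moreover, equality holds if and only if for each $T\in\mathcal{K}_t$, either $D_-(T)=1-t\beta$ or $D_-(T)=(p-t+1)\beta$.
   Context: All graphs are finite and simple. For a graph $G$, $\mathcal{K}_t$ denotes the set of $t$-cliques of $G$ (identified with their vertex sets) and $k_t=|\mathcal{K}_t|$; for a clique $S$, $\mathcal{K}_t(S)$ is the set of $t$-cliques contained in $S$. The degree $d(T)$ of a $t$-clique $T$ is the number of $(t+1)$-cliques containing $T$, and $D(T)=d(T)/n$. For $0<\beta<1$ with $p=\lceil\beta^{-1}\rceil-1$, and $T\in\mathcal{K}_t$ with $1\le t\le p+1$, define $D_-(T)=\min\{D(T),(p-t+1)\beta\}$ and $D_+(T)=D(T)-D_-(T)$. For $2\le t\le p$ and $S\in\mathcal{K}_{t+1}$, define $\widetilde D(S)=\sum_{T\in\mathcal{K}_t(S)}D_-(T)-\big(2-(t+1)\beta+(t-1)D_-(S)\big)$. *)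

theory Defs
  imports Complex_Main
begin

definition simple_graph :: "'a set \<Rightarrow> ('a \<Rightarrow> 'a \<Rightarrow> bool) \<Rightarrow> bool" where
  "simple_graph V E \<longleftrightarrow> finite V \<and> (\<forall>x y. E x y \<longrightarrow> x \<in> V \<and> y \<in> V)
     \<and> (\<forall>x y. E x y \<longrightarrow> E y x) \<and> (\<forall>x. \<not> E x x)"

definition vdeg :: "'a set \<Rightarrow> ('a \<Rightarrow> 'a \<Rightarrow> bool) \<Rightarrow> 'a \<Rightarrow> nat" where
  "vdeg V E v = card {u \<in> V. E v u}"

definition min_degree :: "'a set \<Rightarrow> ('a \<Rightarrow> 'a \<Rightarrow> bool) \<Rightarrow> nat" where
  "min_degree V E = Min (vdeg V E ` V)"

definition cliques :: "'a set \<Rightarrow> ('a \<Rightarrow> 'a \<Rightarrow> bool) \<Rightarrow> nat \<Rightarrow> 'a set set" where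
  "cliques V E t = {S. S \<subseteq> V \<and> card S = t \<and> (\<forall>x\<in>S. \<forall>y\<in>S. x \<noteq> y \<longrightarrow> E x y)}"

definition kcount :: "'a set \<Rightarrow> ('a \<Rightarrow> 'a \<Rightarrow> bool) \<Rightarrow> nat \<Rightarrow> nat" where
  "kcount V E t = card (cliques V E t)"

definition sub_cliques :: "'a set \<Rightarrow> ('a \<Rightarrow> 'a \<Rightarrow> bool) \<Rightarrow> nat \<Rightarrow> 'a set \<Rightarrow> 'a set set" where
  "sub_cliques V E t S = {T \<in> cliques V E t. T \<subseteq> S}"

definition cdeg :: "'a set \<Rightarrow> ('a \<Rightarrow> 'a \<Rightarrow> bool) \<Rightarrow> 'a set \<Rightarrow> nat" where
  "cdeg V E T = card {S \<in> cliques V E (card T + 1). T \<subseteq> S}"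

definition Dn :: "'a set \<Rightarrow> ('a \<Rightarrow> 'a \<Rightarrow> bool) \<Rightarrow> 'a set \<Rightarrow> real" where
  "Dn V E T = real (cdeg V E T) / real (card V)"

definition pval :: "real \<Rightarrow> nat" where
  "pval \<beta> = nat (\<lceil>1 / \<beta>\<rceil> - 1)"

definition Dminus :: "'a set \<Rightarrow> ('a \<Rightarrow> 'a \<Rightarrow> bool) \<Rightarrow> real \<Rightarrow> 'a set \<Rightarrow> real" where
  "Dminus V E \<beta> T = min (Dn V E T) ((real (pval \<beta>) - real (card T) + 1) * \<beta>)"

definition Dplus :: "'a set \<Rightarrow> ('a \<Rightarrow> 'a \<Rightarrow> bool) \<Rightarrow> real \<Rightarrow> 'a set \<Rightarrow> real" where
  "Dplus V E \<beta> T = Dn V E T - Dminus V E \<beta> T"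

definition Dtilde :: "'a set \<Rightarrow> ('a \<Rightarrow> 'a \<Rightarrow> bool) \<Rightarrow> real \<Rightarrow> nat \<Rightarrow> 'a set \<Rightarrow> real" where
  "Dtilde V E \<beta> t S = (\<Sum>T\<in>sub_cliques V E t S. Dminus V E \<beta> T)
      - (2 - (real t + 1) * \<beta> + (real t - 1) * Dminus V E \<beta> S)"

end

theory Submission imports Defs begin

(* Write n = |V|, c = 1 - t*beta and a = (p - t + 1)*beta.  The proof rests on an exact
   identity: the right-hand side minus the left-hand side of the inequality equals
     n * SUM over t-cliques T of (D_-(T) - c) * (a - D_-(T)).
   It follows from double counting pairs (T, S) of a t-clique T inside a (t+1)-clique S
   (so that sum_S sum_{T in S} f(T) = sum_T d(T) f(T) and sum_T d(T) = (t+1) k_{t+1}),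
   together with the pointwise observation that, since D_-(T) = min(D(T), a), one has
   (a - D_-(T)) * (D(T) - D_-(T)) = 0.
   The minimum-degree condition enters only through the common-neighbourhood bound
   d(T) >= (1 - t*beta) n, which with c <= a (a consequence of p + 1 >= 1/beta) gives
   c <= D_-(T) <= a.  Hence every summand is nonnegative, and the sum vanishes exactly
   when each D_-(T) equals c or a. *)

lemma finite_cliques: "finite V \<Longrightarrow> finite (cliques V E m)"
  unfolding cliques_def by (rule finite_subset[of _ "Pow V"]) auto

text \<open>An (m+1)-clique contains exactly m+1 cliques of size m, namely its vertex-deleted subsets.\<close>
lemma card_sub_cliques:
  assumes U: "U \<in> cliques V E (Suc m)"
  shows "card (sub_cliques V E m U) = Suc m"
proof -
  have fU: "finite U" using U unfolding cliques_def by (auto intro: card_ge_0_finite)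
  have "sub_cliques V E m U = (\<lambda>x. U - {x}) ` U"
  proof
    show "sub_cliques V E m U \<subseteq> (\<lambda>x. U - {x}) ` U"
    proof
      fix T assume "T \<in> sub_cliques V E m U"
      hence TU: "T \<subseteq> U" and "card T = m" unfolding sub_cliques_def cliques_def by auto
      hence "card (U - T) = 1" using U fU by (simp add: card_Diff_subset cliques_def finite_subset)
      then obtain x where "U - T = {x}" using card_1_singletonE by blast
      hence "T = U - {x}" "x \<in> U" using TU by auto
      thus "T \<in> (\<lambda>x. U - {x}) ` U" by blast
    qed
    show "(\<lambda>x. U - {x}) ` U \<subseteq> sub_cliques V E m U"
      using U fU unfolding sub_cliques_def cliques_def by auto
  qed
  moreover have "inj_on (\<lambda>x. U - {x}) U" by (auto simp: inj_on_def)
  ultimately show ?thesis using U by (simp add: card_image cliques_def)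
qed

lemma double_count:
  assumes "finite V"
  shows "(\<Sum>S\<in>cliques V E (Suc m). \<Sum>T\<in>sub_cliques V E m S. f T)
       = (\<Sum>T\<in>cliques V E m. real (cdeg V E T) * f T)"
proof -
  have "(\<Sum>S\<in>cliques V E (Suc m). \<Sum>T\<in>sub_cliques V E m S. f T)
      = (\<Sum>S\<in>cliques V E (Suc m). \<Sum>T\<in>{T. T \<in> cliques V E m \<and> T \<subseteq> S}. f T)"
    unfolding sub_cliques_def by simp
  also have "\<dots> = (\<Sum>T\<in>cliques V E m. \<Sum>S\<in>{S. S \<in> cliques V E (Suc m) \<and> T \<subseteq> S}. f T)"
    by (rule sum.swap_restrict) (use assms finite_cliques in auto)
  also have "\<dots> = (\<Sum>T\<in>cliques V E m. real (cdeg V E T) * f T)"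
    by (rule sum.cong) (auto simp: cdeg_def cliques_def)
  finally show ?thesis .
qed

lemma sum_cdeg:
  assumes "finite V"
  shows "(\<Sum>T\<in>cliques V E m. real (cdeg V E T)) = real (Suc m) * real (kcount V E (Suc m))"
proof -
  have "(\<Sum>T\<in>cliques V E m. real (cdeg V E T))
      = (\<Sum>S\<in>cliques V E (Suc m). \<Sum>T\<in>sub_cliques V E m S. (1::real))"
    using double_count[OF assms, where E=E and m=m and f="\<lambda>_. 1"] by simp
  also have "\<dots> = (\<Sum>S\<in>cliques V E (Suc m). real (Suc m))"
    by (rule sum.cong) (auto simp: card_sub_cliques simp del: of_nat_Suc)
  finally show ?thesis by (simp add: kcount_def)
qed

text \<open>The common neighbourhood of a vertex set T, and the non-neighbourhood of a vertex v
  (which contains v itself, as the graph is loopless).\<close>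
definition common_nbhd :: "'a set \<Rightarrow> ('a \<Rightarrow> 'a \<Rightarrow> bool) \<Rightarrow> 'a set \<Rightarrow> 'a set" where
  "common_nbhd V E T = {u \<in> V - T. \<forall>v\<in>T. E v u}"

definition non_nbhd :: "'a set \<Rightarrow> ('a \<Rightarrow> 'a \<Rightarrow> bool) \<Rightarrow> 'a \<Rightarrow> 'a set" where
  "non_nbhd V E v = {u \<in> V. \<not> E v u}"

text \<open>The (m+1)-cliques containing a clique T are exactly T plus one common neighbour.\<close>
lemma cdeg_eq_card_common_nbhd:
  assumes G: "simple_graph V E" and T: "T \<in> cliques V E m"
  shows "cdeg V E T = card (common_nbhd V E T)"
proof -
  have fV: "finite V" using G unfolding simple_graph_def by auto
  have TV: "T \<subseteq> V" and cl: "\<forall>x\<in>T. \<forall>y\<in>T. x \<noteq> y \<longrightarrow> E x y"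
    using T unfolding cliques_def by auto
  have fT: "finite T" using TV fV finite_subset by blast
  have sym: "\<And>x y. E x y \<Longrightarrow> E y x" using G unfolding simple_graph_def by blast
  have "{S \<in> cliques V E (card T + 1). T \<subseteq> S} = (\<lambda>u. insert u T) ` common_nbhd V E T"
  proof
    show "{S \<in> cliques V E (card T + 1). T \<subseteq> S} \<subseteq> (\<lambda>u. insert u T) ` common_nbhd V E T"
    proof
      fix S assume "S \<in> {S \<in> cliques V E (card T + 1). T \<subseteq> S}"
      hence SV: "S \<subseteq> V" and cS: "card S = card T + 1" and TS: "T \<subseteq> S"
        and clS: "\<forall>x\<in>S. \<forall>y\<in>S. x \<noteq> y \<longrightarrow> E x y" unfolding cliques_def by auto
      have "card (S - T) = 1" using cS TS fT by (simp add: card_Diff_subset)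
      then obtain u where u: "S - T = {u}" using card_1_singletonE by blast
      hence "u \<in> common_nbhd V E T" unfolding common_nbhd_def using SV TS clS by blast
      moreover have "S = insert u T" using u TS by auto
      ultimately show "S \<in> (\<lambda>u. insert u T) ` common_nbhd V E T" by blast
    qed
    show "(\<lambda>u. insert u T) ` common_nbhd V E T \<subseteq> {S \<in> cliques V E (card T + 1). T \<subseteq> S}"
      unfolding cliques_def common_nbhd_def using TV fT cl sym by auto
  qed
  moreover have "inj_on (\<lambda>u. insert u T) (common_nbhd V E T)"
    unfolding inj_on_def common_nbhd_def by auto
  ultimately show ?thesis unfolding cdeg_def by (simp add: card_image)
qed

lemma card_non_nbhd:
  assumes G: "simple_graph V E" and v: "v \<in> V"
  shows "real (card (non_nbhd V E v)) \<le> real (card V) - real (min_degree V E)"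
proof -
  have fV: "finite V" using G unfolding simple_graph_def by auto
  have "card (non_nbhd V E v) + vdeg V E v = card (non_nbhd V E v \<union> {u \<in> V. E v u})"
    unfolding vdeg_def non_nbhd_def by (subst card_Un_disjoint) (use fV in auto)
  also have "non_nbhd V E v \<union> {u \<in> V. E v u} = V" unfolding non_nbhd_def by auto
  finally have "card (non_nbhd V E v) + vdeg V E v = card V" .
  moreover have "min_degree V E \<le> vdeg V E v" using v fV unfolding min_degree_def by auto
  ultimately show ?thesis by linarith
qed

text \<open>Union bound: every vertex outside the common neighbourhood of T is a non-neighbour of
  some vertex of T, so d(T) \<ge> n - |T| (n - \<delta>(G)).\<close>
lemma cdeg_lower_bound:
  assumes G: "simple_graph V E" and T: "T \<in> cliques V E t"
  shows "real (card V) - real t * (real (card V) - real (min_degree V E)) \<le> real (cdeg V E T)"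
proof -
  have fV: "finite V" using G unfolding simple_graph_def by auto
  have TV: "T \<subseteq> V" and cT: "card T = t" using T unfolding cliques_def by auto
  have fT: "finite T" using TV fV finite_subset by blast
  have irrefl: "\<And>x. \<not> E x x" using G unfolding simple_graph_def by blast
  have cover: "V - common_nbhd V E T \<subseteq> (\<Union>v\<in>T. non_nbhd V E v)"
    unfolding common_nbhd_def non_nbhd_def using irrefl by auto
  have "card (V - common_nbhd V E T) \<le> card (\<Union>v\<in>T. non_nbhd V E v)"
    by (rule card_mono[OF _ cover]) (use fT fV in \<open>auto simp: non_nbhd_def\<close>)
  also have "\<dots> \<le> (\<Sum>v\<in>T. card (non_nbhd V E v))" by (rule card_UN_le[OF fT])
  finally have "real (card (V - common_nbhd V E T)) \<le> (\<Sum>v\<in>T. real (card (non_nbhd V E v)))"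
    by (metis of_nat_le_iff of_nat_sum)
  also have "\<dots> \<le> (\<Sum>v\<in>T. real (card V) - real (min_degree V E))"
    by (rule sum_mono) (use card_non_nbhd[OF G] TV in blast)
  also have "\<dots> = real t * (real (card V) - real (min_degree V E))" using cT by simp
  also have "real (card (V - common_nbhd V E T)) = real (card V) - real (card (common_nbhd V E T))"
    using fV by (simp add: card_Diff_subset common_nbhd_def of_nat_diff card_mono)
  finally show ?thesis using cdeg_eq_card_common_nbhd[OF G T] by simp
qed

text \<open>With D_- = min(D, a) and D_+ = D - D_-, the quantity below is n (D_- - c)(a - D_-):
  the two sides differ by (a - D_-)(d - n D_-), and one of these factors always vanishes.\<close>
lemma min_split_identity:
  fixes n d a c :: real
  assumes n: "n > 0"
  shows "n * (min (d/n) a - c) * (a - min (d/n) a)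
       = (c + a) * d - c * a * n - c * n * (d/n - min (d/n) a) - d * min (d/n) a"
proof (cases "d/n \<le> a")
  case True
  hence "d = n * min (d/n) a" using n by simp
  thus ?thesis using n by (simp add: algebra_simps)
next
  case False
  hence "min (d/n) a = a" by simp
  thus ?thesis using n by (simp add: algebra_simps)
qed

text \<open>Since p + 1 = \<lceil>1/\<beta>\<rceil> \<ge> 1/\<beta>, we have (p + 1)\<beta> \<ge> 1, i.e. 1 - t\<beta> \<le> (p - t + 1)\<beta>.\<close>
lemma pval_bound:
  assumes "0 < \<beta>" "\<beta> < 1"
  shows "1 \<le> (real (pval \<beta>) + 1) * \<beta>"
proof -
  have "\<lceil>1 / \<beta>\<rceil> \<ge> 1" using assms by simp
  hence "real (pval \<beta>) + 1 = real_of_int \<lceil>1 / \<beta>\<rceil>" unfolding pval_def by simp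
  hence "real (pval \<beta>) + 1 \<ge> 1 / \<beta>" by linarith
  thus ?thesis using assms by (simp add: field_simps)
qed

lemma sum_slack_expand:
  fixes t :: nat and \<beta> :: real
  assumes fV: "finite V" and V: "V \<noteq> {}"
  defines "c \<equiv> 1 - real t * \<beta>" and "a \<equiv> (real (pval \<beta>) - real t + 1) * \<beta>"
  shows "real (card V) * (\<Sum>T\<in>cliques V E t. (Dminus V E \<beta> T - c) * (a - Dminus V E \<beta> T))
       = (c + a) * ((real t + 1) * real (kcount V E (t+1)))
         - c * a * real (card V) * real (kcount V E t)
         - c * real (card V) * (\<Sum>T\<in>cliques V E t. Dplus V E \<beta> T)
         - (\<Sum>T\<in>cliques V E t. real (cdeg V E T) * Dminus V E \<beta> T)"
proof -
  define n where "n = real (card V)"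
  have n: "n > 0" using fV V unfolding n_def by (simp add: card_gt_0_iff)
  have pointwise: "n * ((Dminus V E \<beta> T - c) * (a - Dminus V E \<beta> T))
      = (c + a) * real (cdeg V E T) - c * a * n - c * n * Dplus V E \<beta> T
        - real (cdeg V E T) * Dminus V E \<beta> T" if "T \<in> cliques V E t" for T
  proof -
    have "Dminus V E \<beta> T = min (real (cdeg V E T) / n) a"
      using that unfolding Dminus_def Dn_def a_def n_def cliques_def by simp
    moreover have "Dplus V E \<beta> T = real (cdeg V E T) / n - Dminus V E \<beta> T"
      unfolding Dplus_def Dn_def n_def ..
    ultimately show ?thesis using min_split_identity[OF n] by (simp add: mult.assoc)
  qed
  have "n * (\<Sum>T\<in>cliques V E t. (Dminus V E \<beta> T - c) * (a - Dminus V E \<beta> T))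
      = (\<Sum>T\<in>cliques V E t. (c + a) * real (cdeg V E T) - c * a * n - c * n * Dplus V E \<beta> T
          - real (cdeg V E T) * Dminus V E \<beta> T)"
    unfolding sum_distrib_left by (rule sum.cong) (simp_all add: pointwise)
  also have "\<dots> = (c + a) * (\<Sum>T\<in>cliques V E t. real (cdeg V E T))
      - c * a * n * real (kcount V E t) - c * n * (\<Sum>T\<in>cliques V E t. Dplus V E \<beta> T)
      - (\<Sum>T\<in>cliques V E t. real (cdeg V E T) * Dminus V E \<beta> T)"
    by (simp add: sum_subtractf sum_distrib_left kcount_def)
  finally show ?thesis using sum_cdeg[OF fV, where E=E and m=t] unfolding n_def by simp
qed

lemma sum_Dtilde_expand:
  assumes fV: "finite V"
  shows "(\<Sum>S\<in>cliques V E (t+1). Dtilde V E \<beta> t S)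
     = (\<Sum>T\<in>cliques V E t. real (cdeg V E T) * Dminus V E \<beta> T)
       - (2 - (real t + 1) * \<beta>) * real (kcount V E (t+1))
       - (real t - 1) * ((real t + 2) * real (kcount V E (t+2)) / real (card V)
                          - (\<Sum>S\<in>cliques V E (t+1). Dplus V E \<beta> S))"
proof -
  let ?K1 = "cliques V E (t+1)"
  have sum_Dn: "(\<Sum>S\<in>?K1. Dn V E S) = (real t + 2) * real (kcount V E (t+2)) / real (card V)"
    using sum_cdeg[OF fV, where E=E and m="t+1"]
    unfolding Dn_def sum_divide_distrib[symmetric] by (simp add: numeral_2_eq_2)
  have "(\<Sum>S\<in>?K1. Dtilde V E \<beta> t S)
      = (\<Sum>S\<in>?K1. \<Sum>T\<in>sub_cliques V E t S. Dminus V E \<beta> T)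
        - (2 - (real t + 1) * \<beta>) * real (kcount V E (t+1))
        - (real t - 1) * ((\<Sum>S\<in>?K1. Dn V E S) - (\<Sum>S\<in>?K1. Dplus V E \<beta> S))"
    unfolding Dtilde_def Dplus_def
    by (simp add: sum_subtractf sum.distrib sum_distrib_left kcount_def)
  thus ?thesis unfolding sum_Dn using double_count[OF fV, where E=E and m=t] by simp
qed

lemma Dtilde_slack_identity:
  assumes fV: "finite V" and V: "V \<noteq> {}"
  shows "(real t - 1 + (real (pval \<beta>) - 2 * real t + 2) * (real t + 1) * \<beta>) * real (kcount V E (t+1))
        + (real t - 1) * (\<Sum>S\<in>cliques V E (t+1). Dplus V E \<beta> S)
        - (1 - real t * \<beta>) * (real (pval \<beta>) - real t + 1) * \<beta> * real (card V) * real (kcount V E t)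
        - (real t - 1) * (real t + 2) * real (kcount V E (t+2)) / real (card V)
        - (1 - real t * \<beta>) * real (card V) * (\<Sum>T\<in>cliques V E t. Dplus V E \<beta> T)
        - (\<Sum>S\<in>cliques V E (t+1). Dtilde V E \<beta> t S)
     = real (card V) * (\<Sum>T\<in>cliques V E t. (Dminus V E \<beta> T - (1 - real t * \<beta>))
                                           * ((real (pval \<beta>) - real t + 1) * \<beta> - Dminus V E \<beta> T))"
  unfolding sum_slack_expand[OF fV V] sum_Dtilde_expand[OF fV] by (simp add: algebra_simps diff_divide_distrib)

lemma Dminus_bounds:
  assumes G: "simple_graph V E" and V: "V \<noteq> {}" and \<beta>: "0 < \<beta>" "\<beta> < 1"
    and md: "real (min_degree V E) = (1 - \<beta>) * real (card V)"
    and T: "T \<in> cliques V E t"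
  shows "1 - real t * \<beta> \<le> Dminus V E \<beta> T"
    and "Dminus V E \<beta> T \<le> (real (pval \<beta>) - real t + 1) * \<beta>"
proof -
  have cT: "card T = t" using T unfolding cliques_def by simp
  have n: "real (card V) > 0"
    using G V unfolding simple_graph_def by (simp add: card_gt_0_iff)
  have "(1 - real t * \<beta>) * real (card V) \<le> real (cdeg V E T)"
    using cdeg_lower_bound[OF G T] unfolding md by (simp add: algebra_simps)
  hence "1 - real t * \<beta> \<le> Dn V E T" unfolding Dn_def using n by (simp add: field_simps)
  moreover have "1 - real t * \<beta> \<le> (real (pval \<beta>) - real t + 1) * \<beta>"
    using pval_bound[OF \<beta>] by (simp add: algebra_simps)
  ultimately show "1 - real t * \<beta> \<le> Dminus V E \<beta> T" unfolding Dminus_def cT by simp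
  show "Dminus V E \<beta> T \<le> (real (pval \<beta>) - real t + 1) * \<beta>" unfolding Dminus_def cT by simp
qed

theorem mainTheorem12:
  fixes V :: "'a set" and E :: "'a \<Rightarrow> 'a \<Rightarrow> bool" and \<beta> :: real and t :: nat
  assumes "simple_graph V E" and "V \<noteq> {}"
    and "0 < \<beta>" and "\<beta> < 1"
    and "2 \<le> t" and "t \<le> pval \<beta>"
    and "real (min_degree V E) = (1 - \<beta>) * real (card V)"
  shows "((\<Sum>S\<in>cliques V E (t+1). Dtilde V E \<beta> t S)
      \<le> (real t - 1 + (real (pval \<beta>) - 2 * real t + 2) * (real t + 1) * \<beta>) * real (kcount V E (t+1))
        + (real t - 1) * (\<Sum>S\<in>cliques V E (t+1). Dplus V E \<beta> S)
        - (1 - real t * \<beta>) * (real (pval \<beta>) - real t + 1) * \<beta> * real (card V) * real (kcount V E t)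
        - (real t - 1) * (real t + 2) * real (kcount V E (t+2)) / real (card V)
        - (1 - real t * \<beta>) * real (card V) * (\<Sum>T\<in>cliques V E t. Dplus V E \<beta> T))
    \<and> ((\<Sum>S\<in>cliques V E (t+1). Dtilde V E \<beta> t S)
      = (real t - 1 + (real (pval \<beta>) - 2 * real t + 2) * (real t + 1) * \<beta>) * real (kcount V E (t+1))
        + (real t - 1) * (\<Sum>S\<in>cliques V E (t+1). Dplus V E \<beta> S)
        - (1 - real t * \<beta>) * (real (pval \<beta>) - real t + 1) * \<beta> * real (card V) * real (kcount V E t)
        - (real t - 1) * (real t + 2) * real (kcount V E (t+2)) / real (card V)
        - (1 - real t * \<beta>) * real (card V) * (\<Sum>T\<in>cliques V E t. Dplus V E \<beta> T)
      \<longleftrightarrow> (\<forall>T\<in>cliques V E t. Dminus V E \<beta> T = 1 - real t * \<beta>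
                              \<or> Dminus V E \<beta> T = (real (pval \<beta>) - real t + 1) * \<beta>))"
proof -
  have fV: "finite V" using assms(1) unfolding simple_graph_def by simp
  have n: "real (card V) > 0" using fV assms(2) by (simp add: card_gt_0_iff)
  define f where "f T = (Dminus V E \<beta> T - (1 - real t * \<beta>))
                        * ((real (pval \<beta>) - real t + 1) * \<beta> - Dminus V E \<beta> T)" for T
  have f_nonneg: "0 \<le> f T" if "T \<in> cliques V E t" for T
    unfolding f_def using Dminus_bounds[OF assms(1-4,7) that] by simp
  have "(\<Sum>T\<in>cliques V E t. f T) = 0 \<longleftrightarrow> (\<forall>T\<in>cliques V E t. f T = 0)"
    using sum_nonneg_eq_0_iff[OF finite_cliques[OF fV]] f_nonneg by blast
  also have "\<dots> \<longleftrightarrow> (\<forall>T\<in>cliques V E t. Dminus V E \<beta> T = 1 - real t * \<beta>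
                              \<or> Dminus V E \<beta> T = (real (pval \<beta>) - real t + 1) * \<beta>)"
    unfolding f_def by auto
  finally have zero_iff: "(\<Sum>T\<in>cliques V E t. f T) = 0 \<longleftrightarrow> (\<forall>T\<in>cliques V E t.
      Dminus V E \<beta> T = 1 - real t * \<beta> \<or> Dminus V E \<beta> T = (real (pval \<beta>) - real t + 1) * \<beta>)" .
  have "0 \<le> (\<Sum>T\<in>cliques V E t. f T)" using f_nonneg by (rule sum_nonneg)
  with n zero_iff show ?thesis
    using Dtilde_slack_identity[OF fV assms(2), where E=E and t=t and \<beta>=\<beta>]
    unfolding f_def[symmetric] by (smt (verit) mult_eq_0_iff zero_le_mult_iff)
qed

end
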